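(* Let $G=(X,\Sigma,\longrightarrow,X_0)$ and $R=(Z,\Sigma,\longrightarrow,Z_0)$ be automata and take $\Sigma_r=\Sigma$. There exists a $\Sigma_{uc}$-admissible supervisor $S$ with $S\|G\simeq R$ if and only if there exists a $\Sigma_{ucr}$-controllability set $E$ from $G$ to $R$ (with $\Sigma_r=\Sigma$) such that $\gamma_R(\bigcup E_0)=Z_0$, i.e. $\forall z\in Z_0\,\exists W\in E_0\,\exists x_0\in X_0\,((x_0,z)\in W)$, where $E_0=\{W\in E:\forall x\in X_0\,\exists z\in Z_0\,((x,z)\in W)\text{ and }W\subseteq X_0\times Z_0\}$ and $\gamma_R(V)=\{z\in Z:(x,z)\in V\text{ for some }x\in X\}$.
   Context: An automaton is a 4-tuple $A=(Q,\Sigma,\longrightarrow,Q_0)$ with state set $Q$, finite event set $\Sigma$, ${\longrightarrow}\subseteq Q\times\Sigma\times Q$ and $\emptyset\neq Q_0\subseteq Q$. Write $q\xrightarrow{\sigma}q'$ for $(q,\sigma,q')\in{\longrightarrow}$, $q\xrightarrow{\sigma}$ if some such $q'$ exists; extend to strings. A state is reachable if reached from an initial state by some string. Events are partitioned into uncontrollable $\Sigma_{uc}$ and controllable $\Sigma_c$; $\Sigma_r\subseteq\Sigma$ denotes the set of required events. For a supervisor $S=(Y,\Sigma,\longrightarrow,Y_0)$, $S\|G=(Y\times X,\Sigma,\longrightarrow,Y_0\times X_0)$ with $(y,x)\xrightarrow{\sigma}(y',x')$ iff $y\xrightarrow{\sigma}y'$ and $x\xrightarrow{\sigma}x'$; $S$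 is $\Sigma_{uc}$-admissible w.r.t. $G$ if for every reachable $(y,x)$ of $S\|G$ and $\sigma\in\Sigma_{uc}$, $x\xrightarrow{\sigma}$ implies $(y,x)\xrightarrow{\sigma}$. For automata $A_1,A_2$ (state sets $Q_1,Q_2$, initial sets $Q_{01},Q_{02}$), $\Phi\subseteq Q_1\times Q_2$ is a simulation if every $q_0\in Q_{01}$ has $p_0\in Q_{02}$ with $(q_0,p_0)\in\Phi$ and for all $(q,p)\in\Phi$, $\sigma\in\Sigma$, $q\xrightarrow{\sigma}q'$ there is $p'$ with $p\xrightarrow{\sigma}p'$, $(q',p')\in\Phi$. $\Phi$ is a bisimulation if both $\Phi$ and $\Phi^{-1}=\{(p,q):(q,p)\in\Phi\}$ are simulations; $A_1\simeq A_2$ means a bisimulation exists. For $W,W'\subseteq X\times Z$: $\mathit{match}_{G,R}(W,\sigma,W')$ iff for all $(x,z)\in W$ and $x\xrightarrow{\sigma}x'$ there is $z'$ with $z\xrightarrow{\sigma}z'$ and $(x',z')\in W'$. $E\subseteq\wp(X\times Z)$ is a $\Sigma_{ucr}$-controllability set from $G$ to $R$ if: (istate) some $W_0\in E$ satisfies $\forall x_0\in X_0\,\exists z_0\in Z_0\,((x_0,z_0)\in W_0)$; (a) for every $W\in E$, $\sigma\in\Sigma_{uc}$ there is $W'\in E$ with $\mathit{match}_{G,R}(W,\sigma,W')$; (b) for every $W\in E$, $(x,z)\in W$, $\sigma\in\Sigma_r$, $z\xrightarrow{\sigma}z'$, there exist $x'$, $W'\in E$ with $x\xrightarrow{\sigma}x'$,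 $(x',z')\in W'$, $\mathit{match}_{G,R}(W,\sigma,W')$. *)

theory Defs
  imports Main
begin

record ('q, 'e) aut =
  st   :: "'q set"
  ev   :: "'e set"
  tr   :: "('q \<times> 'e \<times> 'q) set"
  init :: "'q set"

definition is_aut :: "('q, 'e) aut \<Rightarrow> bool" where
  "is_aut A \<longleftrightarrow> finite (ev A) \<and> tr A \<subseteq> st A \<times> ev A \<times> st A
      \<and> init A \<subseteq> st A \<and> init A \<noteq> {}"

inductive_set reach :: "('q, 'e) aut \<Rightarrow> 'q set" for A where
  reach_init: "q \<in> init A \<Longrightarrow> q \<in> reach A"
| reach_step: "q \<in> reach A \<Longrightarrow> (q, \<sigma>, q') \<in> tr A \<Longrightarrow> q' \<in> reach A"

definition sync :: "('y, 'e) aut \<Rightarrow> ('x, 'e) aut \<Rightarrow> ('y \<times> 'x, 'e) aut" where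
  "sync S G = \<lparr> st = st S \<times> st G, ev = ev G,
     tr = {((y, x), \<sigma>, (y', x')) | y x \<sigma> y' x'. (y, \<sigma>, y') \<in> tr S \<and> (x, \<sigma>, x') \<in> tr G},
     init = init S \<times> init G \<rparr>"

definition admissible :: "'e set \<Rightarrow> ('y, 'e) aut \<Rightarrow> ('x, 'e) aut \<Rightarrow> bool" where
  "admissible Sigma_uc S G \<longleftrightarrow> (\<forall>y x \<sigma> x'. (y, x) \<in> reach (sync S G) \<and> \<sigma> \<in> Sigma_uc \<and> (x, \<sigma>, x') \<in> tr G
      \<longrightarrow> (\<exists>p'. ((y, x), \<sigma>, p') \<in> tr (sync S G)))"

definition simulation :: "('p \<times> 'q) set \<Rightarrow> ('p, 'e) aut \<Rightarrow> ('q, 'e) aut \<Rightarrow> bool" where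
  "simulation \<Phi> A B \<longleftrightarrow>
     (\<forall>q0 \<in> init A. \<exists>p0 \<in> init B. (q0, p0) \<in> \<Phi>) \<and>
     (\<forall>q p \<sigma> q'. (q, p) \<in> \<Phi> \<and> \<sigma> \<in> ev A \<and> (q, \<sigma>, q') \<in> tr A
        \<longrightarrow> (\<exists>p'. (p, \<sigma>, p') \<in> tr B \<and> (q', p') \<in> \<Phi>))"

definition bisimulation :: "('p \<times> 'q) set \<Rightarrow> ('p, 'e) aut \<Rightarrow> ('q, 'e) aut \<Rightarrow> bool" where
  "bisimulation \<Phi> A B \<longleftrightarrow> simulation \<Phi> A B \<and> simulation (\<Phi>\<inverse>) B A"

definition bisimilar :: "('p, 'e) aut \<Rightarrow> ('q, 'e) aut \<Rightarrow> bool" where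
  "bisimilar A B \<longleftrightarrow> (\<exists>\<Phi>. bisimulation \<Phi> A B)"

definition "match" :: "('x, 'e) aut \<Rightarrow> ('z, 'e) aut \<Rightarrow> ('x \<times> 'z) set \<Rightarrow> 'e \<Rightarrow> ('x \<times> 'z) set \<Rightarrow> bool" where
  "match G R W \<sigma> W' \<longleftrightarrow> (\<forall>x z x'. (x, z) \<in> W \<and> (x, \<sigma>, x') \<in> tr G
      \<longrightarrow> (\<exists>z'. (z, \<sigma>, z') \<in> tr R \<and> (x', z') \<in> W'))"

definition ctrl_set :: "'e set \<Rightarrow> 'e set \<Rightarrow> ('x, 'e) aut \<Rightarrow> ('z, 'e) aut \<Rightarrow> ('x \<times> 'z) set set \<Rightarrow> bool" where
  "ctrl_set Sigma_uc Sigma_r G R E \<longleftrightarrow>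
     E \<subseteq> Pow (st G \<times> st R) \<and>
     (\<exists>W0 \<in> E. \<forall>x0 \<in> init G. \<exists>z0 \<in> init R. (x0, z0) \<in> W0) \<and>
     (\<forall>W \<in> E. \<forall>\<sigma> \<in> Sigma_uc. \<exists>W' \<in> E. match G R W \<sigma> W') \<and>
     (\<forall>W \<in> E. \<forall>x z \<sigma> z'. (x, z) \<in> W \<and> \<sigma> \<in> Sigma_r \<and> (z, \<sigma>, z') \<in> tr R
        \<longrightarrow> (\<exists>x' W'. (x, \<sigma>, x') \<in> tr G \<and> W' \<in> E \<and> (x', z') \<in> W' \<and> match G R W \<sigma> W'))"

definition E0 :: "('x, 'e) aut \<Rightarrow> ('z, 'e) aut \<Rightarrow> ('x \<times> 'z) set set \<Rightarrow> ('x \<times> 'z) set set" where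
  "E0 G R E = {W \<in> E. (\<forall>x \<in> init G. \<exists>z \<in> init R. (x, z) \<in> W) \<and> W \<subseteq> init G \<times> init R}"

definition gammaR :: "('x, 'e) aut \<Rightarrow> ('x \<times> 'z) set \<Rightarrow> 'z set" where
  "gammaR G V = {z. \<exists>x \<in> st G. (x, z) \<in> V}"

end

theory Submission
  imports Defs
begin

(* Necessity: from an admissible supervisor S and a bisimulation \<Phi> between S || G and R, collect
   for every supervisor state y the pairs (x, z) such that (y, x) is reachable and related to z.
   A supervisor move y -\<sigma>-> y' makes these sets match, admissibility provides a move for every
   uncontrollable event, and the backward simulation answers every move of R.  Adding the
   restrictions of these sets to initial states provides the members of E0.
   Sufficiency: the controllability set itself is a supervisor, whose states are the sets W and
   whose \<sigma>-moves are the matching steps W -> W'; membership (x, z) \<in> W is the bisimulation. *)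

lemma sync_tr_iff [simp]:
  "((y, x), \<sigma>, (y', x')) \<in> tr (sync S G) \<longleftrightarrow> (y, \<sigma>, y') \<in> tr S \<and> (x, \<sigma>, x') \<in> tr G"
  by (simp add: sync_def)

lemma sync_simps [simp]:
  "st (sync S G) = st S \<times> st G" "ev (sync S G) = ev G" "init (sync S G) = init S \<times> init G"
  by (simp_all add: sync_def)

lemma is_aut_sync: "is_aut S \<Longrightarrow> is_aut G \<Longrightarrow> is_aut (sync S G)"
  by (auto simp: is_aut_def sync_def)

lemma reach_subset_st:
  assumes "is_aut A"
  shows "reach A \<subseteq> st A"
proof
  fix q assume "q \<in> reach A"
  then show "q \<in> st A"
    by (induction rule: reach.induct) (use assms in \<open>auto simp: is_aut_def\<close>)
qed

lemma match_antimono: "W \<subseteq> V \<Longrightarrow> match G R V \<sigma> W' \<Longrightarrow> match G R W \<sigma> W'"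
  unfolding match_def by blast

lemma ctrl_set_subset: "ctrl_set Sigma_uc Sigma_r G R E \<Longrightarrow> E \<subseteq> Pow (st G \<times> st R)"
  unfolding ctrl_set_def by blast

lemma ctrl_set_init:
  "ctrl_set Sigma_uc Sigma_r G R E \<Longrightarrow> \<exists>W0 \<in> E. \<forall>x0 \<in> init G. \<exists>z0 \<in> init R. (x0, z0) \<in> W0"
  unfolding ctrl_set_def by blast

lemma ctrl_set_uncontrollable:
  "ctrl_set Sigma_uc Sigma_r G R E \<Longrightarrow> W \<in> E \<Longrightarrow> \<sigma> \<in> Sigma_uc \<Longrightarrow> \<exists>W' \<in> E. match G R W \<sigma> W'"
  unfolding ctrl_set_def by blast

lemma ctrl_set_required:
  "ctrl_set Sigma_uc Sigma_r G R E \<Longrightarrow> W \<in> E \<Longrightarrow> (x, z) \<in> W \<Longrightarrow> \<sigma> \<in> Sigma_r \<Longrightarrow>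
    (z, \<sigma>, z') \<in> tr R \<Longrightarrow> \<exists>x' W'. (x, \<sigma>, x') \<in> tr G \<and> W' \<in> E \<and> (x', z') \<in> W' \<and> match G R W \<sigma> W'"
  unfolding ctrl_set_def by blast

lemma ctrl_set_Un_subsets:
  assumes E: "ctrl_set Sigma_uc Sigma_r G R E" and F: "\<And>W. W \<in> F \<Longrightarrow> \<exists>V \<in> E. W \<subseteq> V"
  shows "ctrl_set Sigma_uc Sigma_r G R (E \<union> F)"
proof -
  have "E \<union> F \<subseteq> Pow (st G \<times> st R)"
    using ctrl_set_subset[OF E] F by blast
  moreover have "\<exists>W0 \<in> E \<union> F. \<forall>x0 \<in> init G. \<exists>z0 \<in> init R. (x0, z0) \<in> W0"
    using ctrl_set_init[OF E] by blast
  moreover have "\<forall>W \<in> E \<union> F. \<forall>\<sigma> \<in> Sigma_uc. \<exists>W' \<in> E \<union> F. match G R W \<sigma> W'"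
  proof (intro ballI)
    fix W \<sigma> assume "W \<in> E \<union> F" "\<sigma> \<in> Sigma_uc"
    then obtain V where "V \<in> E" "W \<subseteq> V" using F by blast
    then obtain W' where "W' \<in> E" "match G R V \<sigma> W'"
      using ctrl_set_uncontrollable[OF E] \<open>\<sigma> \<in> Sigma_uc\<close> by blast
    then show "\<exists>W' \<in> E \<union> F. match G R W \<sigma> W'"
      using match_antimono[OF \<open>W \<subseteq> V\<close>] by (intro bexI[of _ W']) auto
  qed
  moreover have "\<forall>W \<in> E \<union> F. \<forall>x z \<sigma> z'. (x, z) \<in> W \<and> \<sigma> \<in> Sigma_r \<and> (z, \<sigma>, z') \<in> tr R
      \<longrightarrow> (\<exists>x' W'. (x, \<sigma>, x') \<in> tr G \<and> W' \<in> E \<union> F \<and> (x', z') \<in> W' \<and> match G R W \<sigma> W')"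
  proof (intro ballI allI impI)
    fix W x z \<sigma> z' assume "W \<in> E \<union> F" and step: "(x, z) \<in> W \<and> \<sigma> \<in> Sigma_r \<and> (z, \<sigma>, z') \<in> tr R"
    then obtain V where "V \<in> E" "W \<subseteq> V" using F by blast
    then obtain x' W' where "(x, \<sigma>, x') \<in> tr G" "W' \<in> E" "(x', z') \<in> W'" "match G R V \<sigma> W'"
      using ctrl_set_required[OF E] step by blast
    then show "\<exists>x' W'. (x, \<sigma>, x') \<in> tr G \<and> W' \<in> E \<union> F \<and> (x', z') \<in> W' \<and> match G R W \<sigma> W'"
      using match_antimono[OF \<open>W \<subseteq> V\<close>] by (intro exI[of _ x'] exI[of _ W']) auto
  qed
  ultimately show ?thesis unfolding ctrl_set_def by (intro conjI)
qed

locale supervised_bisimulation =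
  fixes S :: "('y, 'e) aut" and G :: "('x, 'e) aut" and R :: "('z, 'e) aut"
    and \<Phi> :: "(('y \<times> 'x) \<times> 'z) set"
  assumes S: "is_aut S" and G: "is_aut G" and R: "is_aut R"
    and bisim: "bisimulation \<Phi> (sync S G) R"
begin

definition related_pairs :: "'y \<Rightarrow> ('x \<times> 'z) set" where
  "related_pairs y = {(x, z). (y, x) \<in> reach (sync S G) \<and> ((y, x), z) \<in> \<Phi> \<and> z \<in> st R}"

definition init_related_pairs :: "'y \<Rightarrow> ('x \<times> 'z) set" where
  "init_related_pairs y = related_pairs y \<inter> init G \<times> init R"

definition related_pair_sets :: "('x \<times> 'z) set set" where
  "related_pair_sets = range related_pairs \<union> init_related_pairs ` init S"

lemma forward_simulation: "simulation \<Phi> (sync S G) R"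
  and backward_simulation: "simulation (\<Phi>\<inverse>) R (sync S G)"
  using bisim unfolding bisimulation_def by blast+

lemma match_related_pairs_step:
  assumes "(y, \<sigma>, y') \<in> tr S"
  shows "match G R (related_pairs y) \<sigma> (related_pairs y')"
  unfolding match_def
proof (intro allI impI)
  fix x z x' assume "(x, z) \<in> related_pairs y \<and> (x, \<sigma>, x') \<in> tr G"
  then have xz: "(y, x) \<in> reach (sync S G)" "((y, x), z) \<in> \<Phi>" and x': "(x, \<sigma>, x') \<in> tr G"
    by (auto simp: related_pairs_def)
  have step: "((y, x), \<sigma>, (y', x')) \<in> tr (sync S G)" using assms x' by simp
  moreover have "\<sigma> \<in> ev (sync S G)" using x' G by (auto simp: is_aut_def)
  ultimately obtain z' where z': "(z, \<sigma>, z') \<in> tr R" "((y', x'), z') \<in> \<Phi>"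
    using forward_simulation xz(2) unfolding simulation_def by blast
  have "(y', x') \<in> reach (sync S G)" using xz(1) step by (rule reach.reach_step)
  moreover have "z' \<in> st R" using z'(1) R by (auto simp: is_aut_def)
  ultimately show "\<exists>z'. (z, \<sigma>, z') \<in> tr R \<and> (x', z') \<in> related_pairs y'"
    using z' by (auto simp: related_pairs_def)
qed

lemma match_related_pairs_uncontrollable:
  assumes adm: "admissible Sigma_uc S G" and "\<sigma> \<in> Sigma_uc"
  shows "\<exists>y'. match G R (related_pairs y) \<sigma> (related_pairs y')"
proof (cases "\<exists>y'. (y, \<sigma>, y') \<in> tr S")
  case True
  then show ?thesis using match_related_pairs_step by blast
next
  case False
  \<comment> \<open>then admissibility leaves no \<sigma>-move of G from any pair, so matching is vacuous\<close>
  have "match G R (related_pairs y) \<sigma> (related_pairs y)"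
    unfolding match_def
  proof (intro allI impI)
    fix x z x' assume "(x, z) \<in> related_pairs y \<and> (x, \<sigma>, x') \<in> tr G"
    then obtain p' where "((y, x), \<sigma>, p') \<in> tr (sync S G)"
      using adm \<open>\<sigma> \<in> Sigma_uc\<close> unfolding admissible_def related_pairs_def by blast
    with False show "\<exists>z'. (z, \<sigma>, z') \<in> tr R \<and> (x', z') \<in> related_pairs y"
      by (cases p') simp
  qed
  then show ?thesis by blast
qed

lemma related_pairs_required_step:
  assumes "(x, z) \<in> related_pairs y" and "(z, \<sigma>, z') \<in> tr R"
  shows "\<exists>y' x'. (y, \<sigma>, y') \<in> tr S \<and> (x, \<sigma>, x') \<in> tr G \<and> (x', z') \<in> related_pairs y'"
proof -
  have xz: "(y, x) \<in> reach (sync S G)" "(z, (y, x)) \<in> \<Phi>\<inverse>"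
    using assms(1) by (auto simp: related_pairs_def)
  have "\<sigma> \<in> ev R" using assms(2) R by (auto simp: is_aut_def)
  then obtain y' x' where step: "((y, x), \<sigma>, (y', x')) \<in> tr (sync S G)" and "(z', (y', x')) \<in> \<Phi>\<inverse>"
    using backward_simulation xz(2) assms(2) unfolding simulation_def by fast
  moreover have "(y', x') \<in> reach (sync S G)" using xz(1) step by (rule reach.reach_step)
  moreover have "z' \<in> st R" using assms(2) R by (auto simp: is_aut_def)
  ultimately show ?thesis by (auto simp: related_pairs_def)
qed

lemma init_related_pairs_total:
  assumes "y \<in> init S" and "x \<in> init G"
  shows "\<exists>z \<in> init R. (x, z) \<in> init_related_pairs y"
proof -
  have "(y, x) \<in> init (sync S G)" using assms by simp
  then obtain z where "z \<in> init R" "((y, x), z) \<in> \<Phi>"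
    using forward_simulation unfolding simulation_def by blast
  moreover have "(y, x) \<in> reach (sync S G)" using \<open>(y, x) \<in> init (sync S G)\<close> by (rule reach.reach_init)
  ultimately show ?thesis using assms R by (auto simp: init_related_pairs_def related_pairs_def is_aut_def)
qed

lemma ctrl_set_range_related_pairs:
  assumes "admissible Sigma_uc S G"
  shows "ctrl_set Sigma_uc (ev G) G R (range related_pairs)"
proof -
  have "range related_pairs \<subseteq> Pow (st G \<times> st R)"
    using reach_subset_st[OF is_aut_sync[OF S G]] by (auto simp: related_pairs_def)
  moreover obtain y0 where "y0 \<in> init S" using S by (auto simp: is_aut_def)
  then have "\<exists>W0 \<in> range related_pairs. \<forall>x0 \<in> init G. \<exists>z0 \<in> init R. (x0, z0) \<in> W0"
    using init_related_pairs_total by (auto simp: init_related_pairs_def)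
  moreover have "\<forall>W \<in> range related_pairs. \<forall>\<sigma> \<in> Sigma_uc. \<exists>W' \<in> range related_pairs. match G R W \<sigma> W'"
    using match_related_pairs_uncontrollable[OF assms] by blast
  moreover have "\<forall>W \<in> range related_pairs. \<forall>x z \<sigma> z'. (x, z) \<in> W \<and> \<sigma> \<in> ev G \<and> (z, \<sigma>, z') \<in> tr R
      \<longrightarrow> (\<exists>x' W'. (x, \<sigma>, x') \<in> tr G \<and> W' \<in> range related_pairs \<and> (x', z') \<in> W' \<and> match G R W \<sigma> W')"
    using related_pairs_required_step match_related_pairs_step by blast
  ultimately show ?thesis unfolding ctrl_set_def by (intro conjI)
qed

lemma ctrl_set_related_pair_sets:
  assumes "admissible Sigma_uc S G"
  shows "ctrl_set Sigma_uc (ev G) G R related_pair_sets"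
  unfolding related_pair_sets_def
  by (rule ctrl_set_Un_subsets[OF ctrl_set_range_related_pairs[OF assms]]) (auto simp: init_related_pairs_def)

lemma gammaR_E0_related_pair_sets: "gammaR G (\<Union> (E0 G R related_pair_sets)) = init R"
proof
  show "gammaR G (\<Union> (E0 G R related_pair_sets)) \<subseteq> init R"
    unfolding gammaR_def E0_def by blast
next
  show "init R \<subseteq> gammaR G (\<Union> (E0 G R related_pair_sets))"
  proof
    fix z assume "z \<in> init R"
    then obtain y x where yx: "y \<in> init S" "x \<in> init G" "(z, (y, x)) \<in> \<Phi>\<inverse>"
      using backward_simulation unfolding simulation_def by fastforce
    have "init_related_pairs y \<in> E0 G R related_pair_sets"
      using yx(1) init_related_pairs_total unfolding E0_def related_pair_sets_def init_related_pairs_def by blast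
    moreover have "(x, z) \<in> init_related_pairs y"
      using yx \<open>z \<in> init R\<close> R reach.reach_init[of "(y, x)" "sync S G"]
      by (auto simp: init_related_pairs_def related_pairs_def is_aut_def)
    moreover have "x \<in> st G" using yx(2) G by (auto simp: is_aut_def)
    ultimately show "z \<in> gammaR G (\<Union> (E0 G R related_pair_sets))" unfolding gammaR_def by blast
  qed
qed

end

lemma supervisor_imp_ctrl_set:
  assumes "is_aut G" and "is_aut R" and "is_aut S"
    and "admissible Sigma_uc S G" and "bisimilar (sync S G) R"
  shows "\<exists>E. ctrl_set Sigma_uc (ev G) G R E \<and> gammaR G (\<Union> (E0 G R E)) = init R"
proof -
  obtain \<Phi> where "bisimulation \<Phi> (sync S G) R"
    using assms(5) unfolding bisimilar_def by blast
  then interpret supervised_bisimulation S G R \<Phi>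
    using assms(1-3) by unfold_locales
  show ?thesis using ctrl_set_related_pair_sets[OF assms(4)] gammaR_E0_related_pair_sets by blast
qed

definition ctrl_supervisor ::
    "('x, 'e) aut \<Rightarrow> ('z, 'e) aut \<Rightarrow> ('x \<times> 'z) set set \<Rightarrow> (('x \<times> 'z) set, 'e) aut" where
  "ctrl_supervisor G R E = \<lparr> st = E, ev = ev G,
     tr = {(W, \<sigma>, W'). W \<in> E \<and> W' \<in> E \<and> \<sigma> \<in> ev G \<and> match G R W \<sigma> W'},
     init = E0 G R E \<rparr>"

lemma E0_subset: "E0 G R E \<subseteq> E"
  unfolding E0_def by blast

lemma is_aut_ctrl_supervisor:
  assumes "is_aut G" and "E0 G R E \<noteq> {}"
  shows "is_aut (ctrl_supervisor G R E)"
  using assms E0_subset[of G R E] unfolding is_aut_def ctrl_supervisor_def by auto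

lemma admissible_ctrl_supervisor:
  assumes G: "is_aut G" and S: "is_aut (ctrl_supervisor G R E)"
    and E: "ctrl_set Sigma_uc Sigma_r G R E"
  shows "admissible Sigma_uc (ctrl_supervisor G R E) G"
  unfolding admissible_def
proof (intro allI impI)
  fix W x \<sigma> x'
  assume "(W, x) \<in> reach (sync (ctrl_supervisor G R E) G) \<and> \<sigma> \<in> Sigma_uc \<and> (x, \<sigma>, x') \<in> tr G"
  then have "W \<in> E" and \<sigma>: "\<sigma> \<in> Sigma_uc" "\<sigma> \<in> ev G" and x': "(x, \<sigma>, x') \<in> tr G"
    using reach_subset_st[OF is_aut_sync[OF S G]] G
    by (auto simp: ctrl_supervisor_def is_aut_def)
  then obtain W' where "W' \<in> E" "match G R W \<sigma> W'"
    using ctrl_set_uncontrollable[OF E] \<sigma>(1) by blast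
  then have "((W, x), \<sigma>, (W', x')) \<in> tr (sync (ctrl_supervisor G R E) G)"
    using \<open>W \<in> E\<close> \<sigma> x' by (simp add: ctrl_supervisor_def)
  then show "\<exists>p'. ((W, x), \<sigma>, p') \<in> tr (sync (ctrl_supervisor G R E) G)" by blast
qed

lemma bisimulation_ctrl_supervisor:
  assumes evR: "ev R = ev G" and E: "ctrl_set Sigma_uc (ev G) G R E"
    and gam: "gammaR G (\<Union> (E0 G R E)) = init R"
  shows "bisimulation {((W, x), z). W \<in> E \<and> (x, z) \<in> W} (sync (ctrl_supervisor G R E) G) R"
    (is "bisimulation ?\<Phi> ?SG R")
proof -
  have "simulation ?\<Phi> ?SG R"
    unfolding simulation_def
  proof (intro conjI ballI allI impI)
    fix q0 assume "q0 \<in> init ?SG"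
    then show "\<exists>z0 \<in> init R. (q0, z0) \<in> ?\<Phi>"
      by (auto simp: ctrl_supervisor_def E0_def)
  next
    fix q z \<sigma> q' assume "(q, z) \<in> ?\<Phi> \<and> \<sigma> \<in> ev ?SG \<and> (q, \<sigma>, q') \<in> tr ?SG"
    then show "\<exists>z'. (z, \<sigma>, z') \<in> tr R \<and> (q', z') \<in> ?\<Phi>"
      by (cases q; cases q') (auto simp: ctrl_supervisor_def match_def)
  qed
  moreover have "simulation (?\<Phi>\<inverse>) R ?SG"
    unfolding simulation_def
  proof (intro conjI ballI allI impI)
    fix z0 assume "z0 \<in> init R"
    then obtain W x where "W \<in> E0 G R E" "(x, z0) \<in> W"
      using gam unfolding gammaR_def by blast
    moreover from this have "x \<in> init G" unfolding E0_def by blast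
    ultimately show "\<exists>q0 \<in> init ?SG. (z0, q0) \<in> ?\<Phi>\<inverse>"
      using E0_subset[of G R E] by (auto simp: ctrl_supervisor_def)
  next
    fix z q \<sigma> z' assume a: "(z, q) \<in> ?\<Phi>\<inverse> \<and> \<sigma> \<in> ev R \<and> (z, \<sigma>, z') \<in> tr R"
    then obtain W x where q: "q = (W, x)" "W \<in> E" "(x, z) \<in> W" by auto
    moreover have "\<sigma> \<in> ev G" using a evR by simp
    ultimately obtain x' W' where "(x, \<sigma>, x') \<in> tr G" "W' \<in> E" "(x', z') \<in> W'" "match G R W \<sigma> W'"
      using ctrl_set_required[OF E] a by blast
    then show "\<exists>q'. (q, \<sigma>, q') \<in> tr ?SG \<and> (z', q') \<in> ?\<Phi>\<inverse>"
      using q a evR by (auto simp: ctrl_supervisor_def)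
  qed
  ultimately show ?thesis unfolding bisimulation_def by blast
qed

lemma ctrl_set_imp_supervisor:
  fixes G :: "('x, 'e) aut" and R :: "('z, 'e) aut"
  assumes G: "is_aut G" and R: "is_aut R" and evR: "ev R = ev G"
    and E: "ctrl_set Sigma_uc (ev G) G R E" and gam: "gammaR G (\<Union> (E0 G R E)) = init R"
  shows "\<exists>S :: (('x \<times> 'z) set, 'e) aut. is_aut S \<and> ev S = ev G \<and>
           admissible Sigma_uc S G \<and> bisimilar (sync S G) R"
proof -
  have "E0 G R E \<noteq> {}"
    using R gam unfolding is_aut_def gammaR_def by auto
  then have S: "is_aut (ctrl_supervisor G R E)"
    using is_aut_ctrl_supervisor G by blast
  moreover have "ev (ctrl_supervisor G R E) = ev G"
    by (simp add: ctrl_supervisor_def)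
  moreover have "admissible Sigma_uc (ctrl_supervisor G R E) G"
    using admissible_ctrl_supervisor[OF G S E] .
  moreover have "bisimilar (sync (ctrl_supervisor G R E) G) R"
    using bisimulation_ctrl_supervisor[OF evR E gam] unfolding bisimilar_def by blast
  ultimately show ?thesis by (intro exI[of _ "ctrl_supervisor G R E"] conjI)
qed

theorem corollary3:
  fixes G :: "('x, 'e) aut" and R :: "('z, 'e) aut" and Sigma_uc Sigma_c :: "'e set"
  assumes "is_aut G" and "is_aut R" and "ev R = ev G"
    and "Sigma_uc \<inter> Sigma_c = {}" and "Sigma_uc \<union> Sigma_c = ev G"
  shows "((\<exists>S :: (('x \<times> 'z) set, 'e) aut. is_aut S \<and> ev S = ev G \<and>
              admissible Sigma_uc S G \<and> bisimilar (sync S G) R)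
          \<longleftrightarrow> (\<exists>E. ctrl_set Sigma_uc (ev G) G R E \<and> gammaR G (\<Union> (E0 G R E)) = init R))
      \<and> (\<forall>S :: ('y, 'e) aut. is_aut S \<and> ev S = ev G \<and>
              admissible Sigma_uc S G \<and> bisimilar (sync S G) R
          \<longrightarrow> (\<exists>E. ctrl_set Sigma_uc (ev G) G R E \<and> gammaR G (\<Union> (E0 G R E)) = init R))"
proof (intro conjI iffI allI impI)
  fix S :: "('y, 'e) aut"
  assume "is_aut S \<and> ev S = ev G \<and> admissible Sigma_uc S G \<and> bisimilar (sync S G) R"
  then show "\<exists>E. ctrl_set Sigma_uc (ev G) G R E \<and> gammaR G (\<Union> (E0 G R E)) = init R"
    using supervisor_imp_ctrl_set[OF assms(1,2)] by blast
next
  assume "\<exists>S :: (('x \<times> 'z) set, 'e) aut. is_aut S \<and> ev S = ev G \<and>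
            admissible Sigma_uc S G \<and> bisimilar (sync S G) R"
  then show "\<exists>E. ctrl_set Sigma_uc (ev G) G R E \<and> gammaR G (\<Union> (E0 G R E)) = init R"
    using supervisor_imp_ctrl_set[OF assms(1,2)] by blast
next
  assume "\<exists>E. ctrl_set Sigma_uc (ev G) G R E \<and> gammaR G (\<Union> (E0 G R E)) = init R"
  then show "\<exists>S :: (('x \<times> 'z) set, 'e) aut. is_aut S \<and> ev S = ev G \<and>
               admissible Sigma_uc S G \<and> bisimilar (sync S G) R"
    using ctrl_set_imp_supervisor[OF assms(1-3)] by blast
qed

end
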